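(* Let $\lambda=\lambda_1 f_1+\lambda_2 f_2$ be the highest weight of a non-trivial irreducible representation of $SU_3$ (with $f_1,f_2$ the fundamental weights and $\lambda_1,\lambda_2\in\mathbb{Z}_{\ge0}$), and assume $\lambda$ lies on the border of the Weyl chamber, i.e. $\lambda=(\lambda_1,0)$ or $\lambda=(0,\lambda_2)$, with $\lambda\ne(0,0)$. Let $T=\mathrm{diag}(1,0,-1)\in\mathfrak{sl}_3(\mathbb{C})$, and for $m\in\mathbb{N}$ let $\rho_{m\lambda}$ denote the irreducible representation of $SU_3$ (and of $\mathfrak{sl}_3(\mathbb{C})$) with highest weight $m\lambda$. Then the nearest neighbour distributions $\mu_{\rho_{m\lambda}(T)}$ converge to the Dirac measure $\delta_0$ as $m\to\infty$, in the Kolmogorov–Smirnov distance.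
   Context: For an $N\times N$ hermitian matrix $A$ with eigenvalues (with multiplicity) $x_1\le\dots\le x_N$, its nearest neighbour distribution is $\mu_A=\frac1N\sum_{j=1}^{N-1}\delta_{\frac{N}{x_N-x_1}(x_{j+1}-x_j)}$ if $x_1\ne x_N$, and $\mu_A=\frac{N-1}{N}\delta_0$ if all eigenvalues coincide. The Kolmogorov–Smirnov distance between finite Borel measures $\mu,\nu$ on $\mathbb{R}_{\ge0}$ is $\sup_{x\ge0}|\int_0^x d\mu-\int_0^x d\nu|$. Since $T\in i\,\mathfrak{su}_3$, $\rho_{m\lambda}(T)$ is hermitian. *)

theory Defs
  imports Complex_Main "Jordan_Normal_Form.Char_Poly" "HOL-Library.Multiset"
begin

(* Monomial basis of Sym^n(C^3): exponent vectors [a,b,c] with a+b+c = n. *)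
definition sym_basis :: "nat \<Rightarrow> nat list list" where
  "sym_basis n = concat (map (\<lambda>a. map (\<lambda>b. [a, b, n - a - b]) [0..<Suc n - a]) [0..<Suc n])"

(* The representation of gl_3(C) (hence of sl_3(C)) on Sym^n(C^3) = homogeneous polynomials
   of degree n in x_0,x_1,x_2, where X acts as the derivation
   X . x^al = sum_{k,l} X_kl * al_l * x^(al - e_l + e_k).
   This is the irreducible representation with highest weight n f_1. *)
definition sym_rep :: "nat \<Rightarrow> complex mat \<Rightarrow> complex mat" where
  "sym_rep n X = (let B = sym_basis n; d = length B in
     mat d d (\<lambda>(i, j). let al = B ! j; be = B ! i in
       (\<Sum>k<3. \<Sum>l<3.
          if 0 < al ! l \<and> (al[l := al ! l - 1])[k := (al[l := al ! l - 1]) ! k + 1] = be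
          then X $$ (k, l) * of_nat (al ! l) else 0)))"

definition dual_rep :: "(complex mat \<Rightarrow> complex mat) \<Rightarrow> complex mat \<Rightarrow> complex mat" where
  "dual_rep \<rho> X = - transpose_mat (\<rho> X)"

(* Irreducible representation with highest weight l1 f_1 + l2 f_2, for weights on the
   border of the Weyl chamber (l1 = 0 or l2 = 0): Sym^l1 of C^3, resp. Sym^l2 of the dual of C^3.
   (Only used for border weights.) *)
definition border_irrep :: "nat \<Rightarrow> nat \<Rightarrow> complex mat \<Rightarrow> complex mat" where
  "border_irrep l1 l2 = (if l2 = 0 then sym_rep l1 else dual_rep (sym_rep l2))"

definition T_mat :: "complex mat" where
  "T_mat = mat 3 3 (\<lambda>(i, j). if i = j then [1, 0, -1] ! i else 0)"

(* eigenvalues with multiplicity (real parts; the matrices considered are hermitian), sorted *)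
definition sorted_eigs :: "complex mat \<Rightarrow> real list" where
  "sorted_eigs A = sorted_list_of_multiset (image_mset Re (proots (char_poly A)))"

(* cumulative mass  mu_A([0,x])  of the nearest neighbour distribution of A *)
definition nn_cdf :: "complex mat \<Rightarrow> real \<Rightarrow> real" where
  "nn_cdf A x = (let xs = sorted_eigs A; N = length xs in
     if xs ! 0 \<noteq> xs ! (N - 1) then
       real (card {j. j < N - 1 \<and>
               real N / (xs ! (N - 1) - xs ! 0) * (xs ! (j + 1) - xs ! j) \<le> x}) / real N
     else real (N - 1) / real N)"

definition ks_to_dirac0 :: "complex mat \<Rightarrow> real" where
  "ks_to_dirac0 A = (SUP x\<in>{0..}. \<bar>nn_cdf A x - 1\<bar>)"

end

(* T acts diagonally on the monomial basis of Sym^n(C^3): the monomial with exponents [a, b, c]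
   has weight a - c in [-n, n], and the dual representation merely negates the weights. Hence
   rho(T) has (n + 1)(n + 2)/2 eigenvalues but at most 2n + 1 distinct ones, so at most 2n gaps
   of its sorted spectrum are nonzero. Every zero gap is counted by the cumulative distribution
   of the nearest neighbour measure at each x >= 0, which puts the Kolmogorov-Smirnov distance
   to delta_0 below (2n + 2)/dim = 4/(n + 2). *)

theory Submission
  imports Defs
begin

lemma proots_prod_list_linear: "proots (\<Prod>a\<leftarrow>xs. [:- a, 1:]) = mset (xs :: 'a::idom list)"
proof (induction xs)
  case (Cons a xs)
  have nonzero: "(\<Prod>a\<leftarrow>xs. [:- a, 1:]) \<noteq> 0" by (auto simp: prod_list_zero_iff)
  have "proots (\<Prod>a\<leftarrow>a # xs. [:- a, 1:]) = proots [:- a, 1:] + proots (\<Prod>a\<leftarrow>xs. [:- a, 1:])"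
    by (simp only: list.map prod_list.Cons, rule proots_mult) (use nonzero in auto)
  then show ?case using Cons by simp
qed simp

lemma sorted_eigs_upper_triangular:
  assumes "A \<in> carrier_mat n n" and "upper_triangular A"
  shows "sorted_eigs A = sort (map Re (diag_mat A))"
  using char_poly_upper_triangular[OF assms]
  by (simp add: sorted_eigs_def proots_prod_list_linear flip: mset_map)

lemma card_ascents_le_card_set:
  fixes xs :: "'a::linorder list"
  assumes "sorted xs"
  shows "card {j. j < length xs - 1 \<and> xs ! (j + 1) \<noteq> xs ! j} \<le> card (set xs)"
proof -
  let ?D = "{j. j < length xs - 1 \<and> xs ! (j + 1) \<noteq> xs ! j}"
  have less: "xs ! (i + 1) < xs ! (j + 1)" if "i < j" "j \<in> ?D" for i j
  proof -
    have "xs ! (i + 1) \<le> xs ! j" using that assms by (auto intro: sorted_nth_mono)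
    also have "\<dots> < xs ! (j + 1)"
    proof -
      have "j + 1 < length xs" using that by auto
      then have "xs ! j \<le> xs ! (j + 1)" using assms by (simp add: sorted_nth_mono)
      moreover have "xs ! (j + 1) \<noteq> xs ! j" using that(2) by simp
      ultimately show ?thesis by simp
    qed
    finally show ?thesis .
  qed
  have "inj_on (\<lambda>j. xs ! (j + 1)) ?D"
  proof (rule inj_onI)
    fix i j assume "i \<in> ?D" "j \<in> ?D" "xs ! (i + 1) = xs ! (j + 1)"
    then show "i = j" using less[of i j] less[of j i] by (cases i j rule: linorder_cases) auto
  qed
  moreover have "(\<lambda>j. xs ! (j + 1)) ` ?D \<subseteq> set xs" by auto
  ultimately show ?thesis by (rule card_inj_on_le) simp
qed

lemma nn_cdf_nonneg: "0 \<le> nn_cdf A x"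
  by (simp add: nn_cdf_def Let_def)

lemma nn_cdf_le_one: "nn_cdf A x \<le> 1"
proof -
  define N where "N = length (sorted_eigs A)"
  have "card {j. j < N - 1 \<and> P j} \<le> N" for P
    by (rule order.trans[OF card_mono[of "{..<N - 1}"]]) auto
  then show ?thesis
    unfolding nn_cdf_def Let_def N_def[symmetric] by (auto simp: divide_le_eq_1)
qed

lemma one_minus_nn_cdf_le:
  assumes "sorted_eigs A \<noteq> []" and "0 \<le> x"
  shows "1 - nn_cdf A x \<le> (card (set (sorted_eigs A)) + 1) / length (sorted_eigs A)"
proof -
  define xs where "xs = sorted_eigs A"
  define N where "N = length xs"
  have N: "0 < N" using assms(1) by (simp add: xs_def N_def)
  show ?thesis
  proof (cases "xs ! 0 = xs ! (N - 1)")
    case True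
    then have "nn_cdf A x = real (N - 1) / N"
      by (simp add: nn_cdf_def Let_def xs_def N_def)
    then have "1 - nn_cdf A x = 1 / N"
      using N by (simp add: of_nat_diff field_simps)
    then show ?thesis using N by (simp add: xs_def N_def divide_right_mono)
  next
    case False
    define C where "C = {j. j < N - 1 \<and> real N / (xs ! (N - 1) - xs ! 0) * (xs ! (j + 1) - xs ! j) \<le> x}"
    define D where "D = {j. j < N - 1 \<and> xs ! (j + 1) \<noteq> xs ! j}"
    have "nn_cdf A x = card C / N"
      using False by (simp add: nn_cdf_def Let_def xs_def N_def C_def)
    moreover have "{..<N - 1} - D \<subseteq> C"
      using assms(2) by (auto simp: C_def D_def)
    then have "card ({..<N - 1} - D) \<le> card C"
      by (intro card_mono) (auto simp: C_def)
    moreover have "card ({..<N - 1} - D) = N - 1 - card D"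
    proof -
      have "D \<subseteq> {..<N - 1}" by (auto simp: D_def)
      then show ?thesis by (simp add: card_Diff_subset finite_subset)
    qed
    moreover have "card D \<le> card (set xs)"
      unfolding D_def N_def by (rule card_ascents_le_card_set) (simp add: xs_def sorted_eigs_def)
    ultimately have "1 - nn_cdf A x \<le> (card (set xs) + 1) / N"
      using N by (simp add: field_simps)
    then show ?thesis by (simp add: xs_def N_def)
  qed
qed

lemma ks_to_dirac0_nonneg: "0 \<le> ks_to_dirac0 A"
proof -
  have "\<bar>nn_cdf A x - 1\<bar> \<le> 1" for x
    using nn_cdf_nonneg[of A x] nn_cdf_le_one[of A x] by simp
  then show ?thesis
    unfolding ks_to_dirac0_def by (intro cSUP_upper2[of _ _ 0]) (auto intro!: bdd_aboveI2)
qed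

lemma ks_to_dirac0_le:
  assumes "sorted_eigs A \<noteq> []"
  shows "ks_to_dirac0 A \<le> (card (set (sorted_eigs A)) + 1) / length (sorted_eigs A)"
  unfolding ks_to_dirac0_def
proof (rule cSUP_least)
  fix x :: real assume "x \<in> {0..}"
  then show "\<bar>nn_cdf A x - 1\<bar> \<le> (card (set (sorted_eigs A)) + 1) / length (sorted_eigs A)"
    using one_minus_nn_cdf_le[OF assms] nn_cdf_le_one[of A x] by simp
qed simp

lemma ks_to_dirac0_diagonal_le:
  assumes "M \<in> carrier_mat d d" and "0 < d" and "diagonal_mat M"
    and "\<forall>i<d. Re (M $$ (i, i)) \<in> R" and "finite R"
  shows "ks_to_dirac0 M \<le> (card R + 1) / d"
proof -
  have "upper_triangular M"
    using assms(1,3) by (auto simp: upper_triangular_def diagonal_mat_def)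
  then have eigs: "sorted_eigs M = sort (map Re (diag_mat M))"
    using sorted_eigs_upper_triangular[OF assms(1)] by simp
  have length: "length (sorted_eigs M) = d"
    using assms(1) by (simp add: eigs diag_mat_def)
  have "card (set (sorted_eigs M)) \<le> card R"
    using assms(1,4,5) by (intro card_mono) (auto simp: eigs diag_mat_def)
  then have "(card (set (sorted_eigs M)) + 1) / length (sorted_eigs M) \<le> (card R + 1) / d"
    by (simp add: length divide_right_mono)
  with ks_to_dirac0_le[of M] show ?thesis
    using length assms(2) by fastforce
qed

lemma length_sym_basis: "2 * length (sym_basis n) = (n + 1) * (n + 2)"
proof -
  have "length (sym_basis n) = (\<Sum>a<Suc n. Suc n - a)"
    unfolding sym_basis_def by (simp add: length_concat sum_list_sum_nth atLeast0LessThan comp_def)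
  also have "\<dots> = (\<Sum>a<Suc n. Suc a)"
    by (rule sum.reindex_bij_witness[of _ "\<lambda>a. n - a" "\<lambda>a. n - a"]) auto
  also have "2 * \<dots> = (n + 1) * (n + 2)"
    by (induction n) (auto simp: sum.lessThan_Suc)
  finally show ?thesis .
qed

lemma set_sym_basis: "set (sym_basis n) = {[a, b, n - a - b] | a b. a + b \<le> n}"
proof (intro equalityI subsetI)
  fix al assume "al \<in> set (sym_basis n)"
  then show "al \<in> {[a, b, n - a - b] | a b. a + b \<le> n}" by (auto simp: sym_basis_def)
next
  fix al assume "al \<in> {[a, b, n - a - b] | a b. a + b \<le> n}"
  then obtain a b where "a + b \<le> n" "al = [a, b, n - a - b]" by blast
  moreover have "a \<in> set [0..<Suc n]" "b \<in> set [0..<Suc n - a]" using \<open>a + b \<le> n\<close> by auto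
  ultimately show "al \<in> set (sym_basis n)" unfolding sym_basis_def by force
qed

lemma distinct_sym_basis: "distinct (sym_basis n)"
  unfolding sym_basis_def
proof (rule distinct_concat)
  let ?row = "\<lambda>a. map (\<lambda>b. [a, b, n - a - b]) [0..<Suc n - a]"
  have head: "?row a ! 0 = [a, 0, n - a]" if "a \<in> set [0..<Suc n]" for a
    using that by (subst nth_map) (simp_all del: upt_Suc)
  have "inj_on ?row (set [0..<Suc n])"
  proof (rule inj_onI)
    fix a a' assume "a \<in> set [0..<Suc n]" "a' \<in> set [0..<Suc n]" "?row a = ?row a'"
    then have "[a, 0, n - a] = [a', 0, n - a']" using head by metis
    then show "a = a'" by simp
  qed
  then show "distinct (map ?row [0..<Suc n])" by (simp add: distinct_map)
qed (auto simp: distinct_map inj_on_def)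

text \<open>A diagonal \<open>X\<close> acts on the monomial \<open>x\<^sup>\<alpha>\<close> by the weight \<open>\<Sum>\<^sub>l X\<^sub>l\<^sub>l \<alpha>\<^sub>l\<close>: only the
  terms \<open>k = l\<close> of the derivation survive, and they return \<open>x\<^sup>\<alpha>\<close> itself.\<close>
lemma derivation_sum_diagonal:
  fixes X :: "'a::semiring_1 mat"
  assumes "length al = n" and "\<forall>k<n. \<forall>l<n. k \<noteq> l \<longrightarrow> X $$ (k, l) = 0"
  shows "(\<Sum>k<n. \<Sum>l<n.
            if 0 < al ! l \<and> (al[l := al ! l - 1])[k := (al[l := al ! l - 1]) ! k + 1] = be
            then X $$ (k, l) * of_nat (al ! l) else 0)
       = (if al = be then \<Sum>l<n. X $$ (l, l) * of_nat (al ! l) else 0)"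
proof -
  have "(\<Sum>k<n. \<Sum>l<n.
            if 0 < al ! l \<and> (al[l := al ! l - 1])[k := (al[l := al ! l - 1]) ! k + 1] = be
            then X $$ (k, l) * of_nat (al ! l) else 0)
      = (\<Sum>k<n. \<Sum>l<n. if k = l then (if al = be then X $$ (l, l) * of_nat (al ! l) else 0) else 0)"
  proof (intro sum.cong refl)
    fix k l assume kl: "k \<in> {..<n}" "l \<in> {..<n}"
    have restore: "(al[l := al ! l - 1])[l := (al[l := al ! l - 1]) ! l + 1] = al" if "0 < al ! l"
      using that kl assms(1) by simp
    show "(if 0 < al ! l \<and> (al[l := al ! l - 1])[k := (al[l := al ! l - 1]) ! k + 1] = be
            then X $$ (k, l) * of_nat (al ! l) else 0) =
          (if k = l then (if al = be then X $$ (l, l) * of_nat (al ! l) else 0) else 0)"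
      using kl assms(2) restore by (cases "k = l"; cases "al ! l = 0") auto
  qed
  also have "\<dots> = (if al = be then \<Sum>l<n. X $$ (l, l) * of_nat (al ! l) else 0)"
    by simp
  finally show ?thesis .
qed

lemma sym_rep_carrier: "sym_rep n X \<in> carrier_mat (length (sym_basis n)) (length (sym_basis n))"
  by (simp add: sym_rep_def Let_def)

lemma sym_rep_diagonal_entry:
  assumes "\<forall>k<3. \<forall>l<3. k \<noteq> l \<longrightarrow> X $$ (k, l) = 0"
    and "i < length (sym_basis n)" and "j < length (sym_basis n)"
  shows "sym_rep n X $$ (i, j) =
    (if i = j then \<Sum>l<3. X $$ (l, l) * of_nat (sym_basis n ! i ! l) else 0)"
proof -
  let ?B = "sym_basis n"
  have "length (?B ! j) = 3"
    using nth_mem[OF assms(3)] by (auto simp: set_sym_basis)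
  have "sym_rep n X $$ (i, j) = (\<Sum>k<3. \<Sum>l<3.
      if 0 < (?B ! j) ! l \<and> ((?B ! j)[l := (?B ! j) ! l - 1])[k := ((?B ! j)[l := (?B ! j) ! l - 1]) ! k + 1] = ?B ! i
      then X $$ (k, l) * of_nat ((?B ! j) ! l) else 0)"
    using assms(2,3) by (simp add: sym_rep_def Let_def)
  also have "\<dots> = (if ?B ! j = ?B ! i then \<Sum>l<3. X $$ (l, l) * of_nat (?B ! j ! l) else 0)"
    by (rule derivation_sum_diagonal[OF \<open>length (?B ! j) = 3\<close> assms(1)])
  finally have "sym_rep n X $$ (i, j) =
      (if ?B ! j = ?B ! i then \<Sum>l<3. X $$ (l, l) * of_nat (?B ! j ! l) else 0)" .
  moreover have "?B ! j = ?B ! i \<longleftrightarrow> i = j"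
    using nth_eq_iff_index_eq[OF distinct_sym_basis assms(3,2)] by auto
  ultimately show ?thesis by auto
qed

lemma sym_rep_T_mat_entry:
  assumes "i < length (sym_basis n)" and "j < length (sym_basis n)"
  shows "sym_rep n T_mat $$ (i, j) =
    (if i = j then of_nat (sym_basis n ! i ! 0) - of_nat (sym_basis n ! i ! 2) else 0)"
proof -
  have "\<forall>k<3. \<forall>l<3. k \<noteq> l \<longrightarrow> T_mat $$ (k, l) = 0"
    by (simp add: T_mat_def)
  moreover have "(\<Sum>l<3. T_mat $$ (l, l) * of_nat (al ! l)) = of_nat (al ! 0) - of_nat (al ! 2)" for al
    by (simp add: T_mat_def numeral_3_eq_3 numeral_2_eq_2)
  ultimately show ?thesis
    using sym_rep_diagonal_entry[OF _ assms] by simp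
qed

lemma sym_rep_T_mat_diagonal: "diagonal_mat (sym_rep n T_mat)"
  using sym_rep_carrier[of n T_mat] by (auto simp: diagonal_mat_def sym_rep_T_mat_entry)

lemma sym_rep_T_mat_diag_range:
  assumes "i < length (sym_basis n)"
  shows "sym_rep n T_mat $$ (i, i) \<in> of_int ` {- int n..int n}"
proof -
  obtain a b where "a + b \<le> n" and al: "sym_basis n ! i = [a, b, n - a - b]"
    using nth_mem[OF assms] by (auto simp: set_sym_basis)
  then have "int a - int (n - a - b) \<in> {- int n..int n}" by auto
  moreover have "sym_rep n T_mat $$ (i, i) = of_int (int a - int (n - a - b))"
    using assms by (simp add: sym_rep_T_mat_entry al)
  ultimately show ?thesis by blast
qed

lemma dual_rep_sym_rep_T_mat: "dual_rep (sym_rep n) T_mat = - sym_rep n T_mat"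
  using sym_rep_carrier[of n T_mat]
  by (intro eq_matI) (auto simp: dual_rep_def sym_rep_T_mat_entry)

lemma ks_to_dirac0_sym_rep_T_mat_le:
  assumes "M = sym_rep n T_mat \<or> M = - sym_rep n T_mat"
  shows "ks_to_dirac0 M \<le> 4 / (real n + 2)"
proof -
  define d where "d = length (sym_basis n)"
  define R where "R = real_of_int ` {- int n..int n}"
  have dim: "2 * real d = (real n + 1) * (real n + 2)"
    using arg_cong[OF length_sym_basis[of n], of real] by (simp add: d_def algebra_simps)
  then have "0 < d" by (auto intro: Nat.gr0I)
  have card_R: "card R = 2 * n + 1"
    unfolding R_def by (subst card_image) (auto simp: inj_on_def)
  have "M \<in> carrier_mat d d"
    using assms sym_rep_carrier[of n T_mat] by (auto simp: d_def)
  moreover have "diagonal_mat M"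
    using assms sym_rep_T_mat_diagonal[of n] sym_rep_carrier[of n T_mat]
    by (auto simp: diagonal_mat_def)
  moreover have "\<forall>i<d. Re (M $$ (i, i)) \<in> R"
  proof (intro allI impI)
    fix i assume "i < d"
    then obtain w where "w \<in> {- int n..int n}" "sym_rep n T_mat $$ (i, i) = of_int w"
      using sym_rep_T_mat_diag_range[of i n] by (auto simp: d_def)
    moreover have "real_of_int w \<in> R" "real_of_int (- w) \<in> R"
      using \<open>w \<in> {- int n..int n}\<close> unfolding R_def by (intro imageI; simp)+
    ultimately show "Re (M $$ (i, i)) \<in> R"
      using assms \<open>i < d\<close> sym_rep_carrier[of n T_mat] by (auto simp: d_def)
  qed
  ultimately have "ks_to_dirac0 M \<le> (card R + 1) / d"
    using \<open>0 < d\<close> by (intro ks_to_dirac0_diagonal_le) (auto simp: R_def)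
  also have "\<dots> = 4 / (real n + 2)"
    using dim \<open>0 < d\<close> by (simp add: card_R field_simps)
  finally show ?thesis .
qed

lemma ks_to_dirac0_border_irrep_le:
  assumes "l1 = 0 \<or> l2 = 0" and "(l1, l2) \<noteq> (0, 0)"
  shows "ks_to_dirac0 (border_irrep (m * l1) (m * l2) T_mat) \<le> 4 / (real m + 2)"
proof -
  obtain n where "m \<le> n" and n: "border_irrep (m * l1) (m * l2) T_mat = sym_rep n T_mat \<or>
      border_irrep (m * l1) (m * l2) T_mat = - sym_rep n T_mat"
  proof (cases "l2 = 0")
    case True
    with assms have "m \<le> m * l1" by simp
    with True show ?thesis by (intro that[of "m * l1"]) (simp_all add: border_irrep_def)
  next
    case False
    then have "m \<le> m * l2" by simp
    with False show ?thesis
      by (intro that[of "m * l2"]) (simp_all add: border_irrep_def dual_rep_sym_rep_T_mat)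
  qed
  have "ks_to_dirac0 (border_irrep (m * l1) (m * l2) T_mat) \<le> 4 / (real n + 2)"
    by (rule ks_to_dirac0_sym_rep_T_mat_le[OF n])
  also have "\<dots> \<le> 4 / (real m + 2)"
    using \<open>m \<le> n\<close> by (simp add: frac_le)
  finally show ?thesis .
qed

theorem mainTheorem4:
  fixes l1 l2 :: nat
  assumes "l1 = 0 \<or> l2 = 0" and "(l1, l2) \<noteq> (0, 0)"
  shows "(\<lambda>m. ks_to_dirac0 (border_irrep (m * l1) (m * l2) T_mat)) \<longlonglongrightarrow> 0"
proof (rule tendsto_sandwich[of "\<lambda>_. 0" _ _ "\<lambda>m. 4 / (real m + 2)"])
  show "\<forall>\<^sub>F m in sequentially. 0 \<le> ks_to_dirac0 (border_irrep (m * l1) (m * l2) T_mat)"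
    by (simp add: ks_to_dirac0_nonneg)
  show "\<forall>\<^sub>F m in sequentially. ks_to_dirac0 (border_irrep (m * l1) (m * l2) T_mat) \<le> 4 / (real m + 2)"
    using ks_to_dirac0_border_irrep_le[OF assms] by simp
  show "(\<lambda>m. 4 / (real m + 2)) \<longlonglongrightarrow> 0"
    using LIMSEQ_ignore_initial_segment[OF lim_const_over_n[of "4 :: real"], of 2]
    by (simp add: add.commute)
qed simp

end
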